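(* Let $h>0$ and $0<\alpha<\pi/8$, and place the target at $g=(0,0)$. Put $t=\dfrac{2h}{\tan(\pi/4-\alpha)}$, $s_p=(-t/2,h)$, $s_q=(t/2,h)$, and $$L=\frac{2h\sin(2\alpha)}{1-\sin(2\alpha)}.$$ Let $D$ be the vertical segment from $(0,0)$ to $(0,-L)$. Then for every camera location $s\in S$ there is a unit vector $u$ such that the wedge $W(s,u)$ contains both $g$ and the whole segment $D$. (Here $L$ equals the length of the vertical diagonal of the intersection of the wedges $W_p\in\mathcal W(g,s_p)$, $W_q\in\mathcal W(g,s_q)$ whose upper boundary rays both pass through $g$.)
   Context: Work in $\mathbb{R}^2$ with coordinates $(x,z)$. The ground line is $G=\{z=0\}$ and the viewing line is $S=\{z=h\}$, $h>0$. Fix $\alpha>0$. For a point $s$ and a unit vector $u$, the wedge $W(s,u)=\{s+rv:\ r\ge 0,\ |v|=1,\ \angle(v,u)\le\alpha\}$ (apex $s$, opening angle $2\alpha$). For a target $g$ and camera location $s$, $\mathcal W(g,s)$ denotes the set of all wedges $W(s,u)$ containing $g$. *)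

theory Defs
  imports "HOL-Analysis.Analysis"
begin

definition vec_angle :: "real \<times> real \<Rightarrow> real \<times> real \<Rightarrow> real" where
  "vec_angle v u = arccos ((v \<bullet> u) / (norm v * norm u))"

definition wedge :: "real \<Rightarrow> real \<times> real \<Rightarrow> real \<times> real \<Rightarrow> (real \<times> real) set" where
  "wedge \<alpha> s u = {s + r *\<^sub>R v | r v. r \<ge> 0 \<and> norm v = 1 \<and> vec_angle v u \<le> \<alpha>}"

end

theory Submission
  imports Defs
begin

text \<open>A wedge with half-angle \<open>\<alpha>\<close> around the unit axis \<open>u\<close> is the translate of the circular
cone \<open>{w. norm w * cos \<alpha> \<le> w \<bullet> u}\<close>, which is convex. So it suffices to find \<open>u\<close> whose cone contains
the directions \<open>a\<close>, \<open>b\<close> from the camera \<open>s\<close> to the two endpoints of \<open>D\<close>; the normalised bisector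
of \<open>a\<close> and \<open>b\<close> does this as soon as the angle between \<open>a\<close> and \<open>b\<close> is at most \<open>2\<alpha>\<close>. That angle
is largest when \<open>s\<close> is at horizontal distance \<open>\<surd>(h(h + L))\<close> from \<open>D\<close>, and the choice of \<open>L\<close>
makes its sine exactly \<open>sin 2\<alpha>\<close> there.\<close>

lemma add_mem_wedge:
  fixes s u w :: "real \<times> real"
  assumes "norm u = 1" "0 \<le> \<alpha>" "\<alpha> \<le> pi" "norm w * cos \<alpha> \<le> inner w u"
  shows "s + w \<in> wedge \<alpha> s u"
proof -
  obtain r v where "w = r *\<^sub>R v" "r \<ge> 0" "norm v = 1" "vec_angle v u \<le> \<alpha>"
  proof (cases "w = 0")
    case True
    have "vec_angle u u = 0"
      using assms(1) by (simp add: vec_angle_def dot_square_norm)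
    with True assms(1,2) that[of 0 u] show thesis by simp
  next
    case False
    define v where "v = (1 / norm w) *\<^sub>R w"
    have nw: "norm w > 0" using False by simp
    have nv: "norm v = 1" using nw by (simp add: v_def)
    have "cos \<alpha> \<le> inner v u"
      using assms(4) nw by (simp add: v_def pos_le_divide_eq mult.commute)
    moreover have "inner v u \<le> 1"
      using norm_cauchy_schwarz[of v u] nv assms(1) by simp
    ultimately have "arccos (inner v u) \<le> arccos (cos \<alpha>)"
      by (intro arccos_le_arccos) auto
    then have "vec_angle v u \<le> \<alpha>"
      using nv assms(1-3) by (simp add: vec_angle_def arccos_cos)
    moreover have "w = norm w *\<^sub>R v" using nw by (simp add: v_def)
    ultimately show thesis using nv that by simp
  qed
  then show ?thesis unfolding wedge_def by blast
qed

lemma convex_circular_cone: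
  fixes u :: "'a :: real_inner"
  assumes "k \<ge> 0"
  shows "convex {w. norm w * k \<le> inner w u}"
proof (rule convexI)
  fix a b :: 'a and p q :: real
  assume a: "a \<in> {w. norm w * k \<le> inner w u}" and b: "b \<in> {w. norm w * k \<le> inner w u}"
    and p: "0 \<le> p" and q: "0 \<le> q" and "p + q = 1"
  have "norm (p *\<^sub>R a + q *\<^sub>R b) * k \<le> (p * norm a + q * norm b) * k"
    using norm_triangle_ineq[of "p *\<^sub>R a" "q *\<^sub>R b"] p q assms by (intro mult_right_mono) auto
  also have "\<dots> = p * (norm a * k) + q * (norm b * k)" by (simp add: algebra_simps)
  also have "\<dots> \<le> p * inner a u + q * inner b u"
    using a b p q by (intro add_mono mult_left_mono) auto
  also have "\<dots> = inner (p *\<^sub>R a + q *\<^sub>R b) u" by (simp add: inner_add_left)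
  finally show "p *\<^sub>R a + q *\<^sub>R b \<in> {w. norm w * k \<le> inner w u}" by simp
qed

lemma closed_segment_subset_wedge:
  fixes s u a b :: "real \<times> real"
  assumes u: "norm u = 1" and "0 \<le> \<alpha>" "\<alpha> \<le> pi / 2"
    and "norm a * cos \<alpha> \<le> inner a u" "norm b * cos \<alpha> \<le> inner b u"
  shows "closed_segment (s + a) (s + b) \<subseteq> wedge \<alpha> s u"
proof -
  have "closed_segment a b \<subseteq> {w. norm w * cos \<alpha> \<le> inner w u}"
    using assms by (intro closed_segment_subset convex_circular_cone cos_ge_zero) auto
  then show ?thesis
    unfolding closed_segment_translation
    using assms(2,3) by (intro image_subsetI add_mem_wedge[OF u]) auto
qed

lemma exists_axis_within_half_angle:
  fixes a b :: "'a :: real_inner"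
  assumes "a \<noteq> 0" "b \<noteq> 0" "0 \<le> \<alpha>" "\<alpha> < pi / 2"
    and ab: "norm a * norm b * cos (2 * \<alpha>) \<le> inner a b"
  obtains u where "norm u = 1" "norm a * cos \<alpha> \<le> inner a u" "norm b * cos \<alpha> \<le> inner b u"
proof -
  define e1 where "e1 = (1 / norm a) *\<^sub>R a"
  define e2 where "e2 = (1 / norm b) *\<^sub>R b"
  define c where "c = inner e1 e2"
  define n where "n = norm (e1 + e2)"
  define u where "u = (1 / n) *\<^sub>R (e1 + e2)"
  have na: "norm a > 0" "norm b > 0" using assms by auto
  have "cos \<alpha> > 0" using assms by (intro cos_gt_zero_pi) auto
  then have cos2: "cos (2 * \<alpha>) > -1" by (simp add: cos_double_cos)
  have "c = inner a b / (norm a * norm b)" by (simp add: c_def e1_def e2_def)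
  then have cge: "c \<ge> cos (2 * \<alpha>)" using ab na by (simp add: pos_le_divide_eq mult.commute)
  have e11: "inner e1 e1 = 1" and e22: "inner e2 e2 = 1"
    using na by (simp_all add: e1_def e2_def dot_square_norm)
  have n2: "n\<^sup>2 = 2 + 2 * c"
    by (simp add: n_def power2_norm_eq_inner inner_add_left inner_add_right e11 e22 c_def
        inner_commute)
  then have npos: "n > 0" using cge cos2 n_def by (smt (verit) norm_ge_zero power_zero_numeral)
  have "(cos \<alpha>)\<^sup>2 = (1 + cos (2 * \<alpha>)) / 2" by (simp add: cos_double_cos)
  also have "\<dots> \<le> (1 + c) / 2" using cge by simp
  also have "\<dots> = ((1 + c) / n)\<^sup>2"
    using n2 npos cge cos2 by (simp add: power2_eq_square field_simps)
  finally have "(cos \<alpha>)\<^sup>2 \<le> ((1 + c) / n)\<^sup>2" .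
  moreover have "(1 + c) / n \<ge> 0" using npos cge cos2 by simp
  ultimately have ca: "cos \<alpha> \<le> (1 + c) / n" by (rule power2_le_imp_le)
  have "inner a u = norm a * inner e1 u" "inner b u = norm b * inner e2 u"
    using na by (simp_all add: e1_def e2_def)
  moreover have "inner e1 u = (1 + c) / n" "inner e2 u = (1 + c) / n"
    by (simp_all add: u_def inner_add_right e11 e22 c_def inner_commute)
  ultimately have "norm a * cos \<alpha> \<le> inner a u" "norm b * cos \<alpha> \<le> inner b u"
    using mult_left_mono[OF ca, of "norm a"] mult_left_mono[OF ca, of "norm b"] by simp_all
  moreover have "norm u = 1" using npos by (simp add: u_def n_def)
  ultimately show ?thesis using that by blast
qed

text \<open>The defect is \<open>(x\<^sup>2 - h (h + L))\<^sup>2 \<sigma>\<^sup>2\<close>, so equality holds exactly at \<open>x\<^sup>2 = h (h + L)\<close>.\<close>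

lemma viewing_angle_inequality:
  fixes h L x \<sigma> :: real
  assumes "\<sigma> < 1" and L: "L * (1 - \<sigma>) = 2 * h * \<sigma>"
  shows "(x\<^sup>2 + h\<^sup>2) * (x\<^sup>2 + (h + L)\<^sup>2) * (1 - \<sigma>\<^sup>2) \<le> (x\<^sup>2 + h * (h + L))\<^sup>2"
proof -
  define K where "K = h * (h + L)"
  have "L\<^sup>2 * (1 - \<sigma>\<^sup>2) * (1 - \<sigma>) = (L * (1 - \<sigma>))\<^sup>2 * (1 + \<sigma>)"
    by (simp add: power2_eq_square algebra_simps)
  also have "\<dots> = 4 * \<sigma>\<^sup>2 * (h * h * (1 + \<sigma>))"
    by (simp only: L) (simp add: power2_eq_square algebra_simps)
  also have "h * h * (1 + \<sigma>) = h * h * (1 - \<sigma>) + h * (L * (1 - \<sigma>))"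
    by (simp only: L) (simp add: algebra_simps)
  also have "\<dots> = K * (1 - \<sigma>)" by (simp add: K_def algebra_simps)
  finally have KL: "L\<^sup>2 * (1 - \<sigma>\<^sup>2) = 4 * K * \<sigma>\<^sup>2"
    using assms(1) by simp
  have "(x\<^sup>2 + h\<^sup>2) * (x\<^sup>2 + (h + L)\<^sup>2) * (1 - \<sigma>\<^sup>2) = ((x\<^sup>2 + K)\<^sup>2 + x\<^sup>2 * L\<^sup>2) * (1 - \<sigma>\<^sup>2)"
    by (simp add: K_def power2_eq_square algebra_simps)
  also have "\<dots> = (x\<^sup>2 + K)\<^sup>2 * (1 - \<sigma>\<^sup>2) + x\<^sup>2 * (4 * K * \<sigma>\<^sup>2)"
    by (simp only: distrib_right mult.assoc KL)
  also have "\<dots> = (x\<^sup>2 + K)\<^sup>2 - (x\<^sup>2 - K)\<^sup>2 * \<sigma>\<^sup>2"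
    by (simp add: power2_eq_square algebra_simps)
  also have "\<dots> \<le> (x\<^sup>2 + K)\<^sup>2" by simp
  finally show ?thesis by (simp add: K_def)
qed

lemma sin_double_bounds:
  fixes \<alpha> :: real
  assumes "0 \<le> \<alpha>" "\<alpha> < pi / 4"
  shows "0 \<le> sin (2 * \<alpha>)" "sin (2 * \<alpha>) < 1"
proof -
  show "0 \<le> sin (2 * \<alpha>)" using assms by (intro sin_ge_zero) auto
  have "sin (2 * \<alpha>) < sin (pi / 2)" using assms by (intro sin_monotone_2pi) auto
  then show "sin (2 * \<alpha>) < 1" by simp
qed

lemma segment_seen_within_double_angle:
  fixes h \<alpha> x :: real
  assumes "h > 0" "0 \<le> \<alpha>" "\<alpha> < pi / 4"
  defines "L \<equiv> 2 * h * sin (2 * \<alpha>) / (1 - sin (2 * \<alpha>))"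
  defines "a \<equiv> (- x, - h)" and "b \<equiv> (- x, - (h + L))"
  shows "norm a * norm b * cos (2 * \<alpha>) \<le> inner a b"
proof -
  define \<sigma> where "\<sigma> = sin (2 * \<alpha>)"
  have \<sigma>: "0 \<le> \<sigma>" "\<sigma> < 1"
    unfolding \<sigma>_def using sin_double_bounds assms(2,3) by auto
  then have "L * (1 - \<sigma>) = 2 * h * \<sigma>" "L \<ge> 0"
    using assms(1) by (simp_all add: L_def \<sigma>_def)
  then have ineq: "(x\<^sup>2 + h\<^sup>2) * (x\<^sup>2 + (h + L)\<^sup>2) * (1 - \<sigma>\<^sup>2) \<le> (x\<^sup>2 + h * (h + L))\<^sup>2"
    using \<sigma> by (intro viewing_angle_inequality) auto
  have "(norm a)\<^sup>2 = x\<^sup>2 + h\<^sup>2" by (simp add: a_def norm_Pair)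
  moreover have "(norm b)\<^sup>2 = x\<^sup>2 + (h + L)\<^sup>2"
    by (simp add: b_def norm_Pair power2_eq_square) (simp add: algebra_simps)
  moreover have "(cos (2 * \<alpha>))\<^sup>2 = 1 - \<sigma>\<^sup>2" by (simp add: \<sigma>_def cos_squared_eq)
  moreover have ab: "inner a b = x\<^sup>2 + h * (h + L)"
    by (simp add: a_def b_def power2_eq_square algebra_simps)
  ultimately have "(norm a * norm b * cos (2 * \<alpha>))\<^sup>2 \<le> (inner a b)\<^sup>2"
    using ineq by (simp only: power_mult_distrib)
  moreover have "inner a b \<ge> 0" using ab \<open>h > 0\<close> \<open>L \<ge> 0\<close> by simp
  ultimately show ?thesis by (rule power2_le_imp_le)
qed

theorem lemma1:
  fixes h \<alpha> :: real
  assumes "h > 0" and "0 < \<alpha>" and "\<alpha> < pi / 8"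
  defines "L \<equiv> 2 * h * sin (2 * \<alpha>) / (1 - sin (2 * \<alpha>))"
  shows "\<forall>s :: real \<times> real. snd s = h \<longrightarrow>
           (\<exists>u :: real \<times> real. norm u = 1 \<and> (0, 0) \<in> wedge \<alpha> s u \<and>
              closed_segment (0, 0) (0, - L) \<subseteq> wedge \<alpha> s u)"
proof (intro allI impI)
  fix s :: "real \<times> real"
  assume "snd s = h"
  then obtain x where s: "s = (x, h)" by (metis prod.collapse)
  define a :: "real \<times> real" where "a = (- x, - h)"
  define b :: "real \<times> real" where "b = (- x, - (h + L))"
  have "norm a * norm b * cos (2 * \<alpha>) \<le> inner a b"
    using segment_seen_within_double_angle[of h \<alpha> x] assms by (simp add: a_def b_def L_def)
  moreover have "L \<ge> 0"
    using sin_double_bounds[of \<alpha>] assms(1-3) by (simp add: L_def)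
  then have "a \<noteq> 0" "b \<noteq> 0"
    using \<open>h > 0\<close> by (auto simp: a_def b_def zero_prod_def)
  ultimately obtain u where "norm u = 1" "norm a * cos \<alpha> \<le> inner a u" "norm b * cos \<alpha> \<le> inner b u"
    using exists_axis_within_half_angle[of a b \<alpha>] assms by auto
  moreover have "s + a = (0, 0)" "s + b = (0, - L)" by (simp_all add: s a_def b_def)
  ultimately have "norm u = 1" "closed_segment (0, 0) (0, - L) \<subseteq> wedge \<alpha> s u"
    using closed_segment_subset_wedge[of u \<alpha> a b s] assms by auto
  then show "\<exists>u. norm u = 1 \<and> (0, 0) \<in> wedge \<alpha> s u \<and>
      closed_segment (0, 0) (0, - L) \<subseteq> wedge \<alpha> s u"
    using ends_in_segment(1) by blast
qed

end
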